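(* Let $G$ be an elementary abelian $2$-group, regarded as a vector space over the field $\mathbb{F}_2$. Let $G\otimes_{\mathrm{sym}}G$ denote the subgroup of $G\otimes G$ generated by $\{v\otimes v\mid v\in G\}$, and let $\pi:G\wedge G\to G\otimes_{\mathrm{sym}}G$ be the group homomorphism characterized by $\pi(u\wedge v)=u\otimes v-v\otimes u$. Let $(G\wedge G)\times_\wedge G$ be the group with underlying set $(G\wedge G)\times G$ and multiplication $(s,g)(t,h)=(s+t+g\wedge h,\;g+h)$. Then the map $$\phi:(G\wedge G)\times_\wedge G\to G\otimes_{\mathrm{sym}}G,\qquad (t,g)\mapsto \pi(t)+g\otimes g$$ is a group isomorphism, and $\phi(0,g)=g\otimes g$ for all $g\in G$.
   Context: $G\otimes G$ and $G\wedge G$ denote the tensor square and exterior square of $G$ (as $\mathbb{F}_2$-vector spaces, equivalently as abelian groups). The homomorphism $\pi$ is well defined with values in $G\otimes_{\mathrm{sym}}G$ since $u\otimes v-v\otimes u=(u+v)\otimes(u+v)-u\otimes u-v\otimes v$ in characteristic $2$. *)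

theory Defs
  imports "HOL-Algebra.Algebra" "HOL-Algebra.Free_Abelian_Groups"
begin

text \<open>G is a (multiplicatively written) HOL-Algebra group. The tensor square of
  abelian groups is the free abelian group on G x G modulo the bilinearity relations.\<close>

definition tensor_rels :: "('a, 'b) monoid_scheme \<Rightarrow> (('a \<times> 'a) \<Rightarrow>\<^sub>0 int) set" where
  "tensor_rels G =
     {Poly_Mapping.single (u \<otimes>\<^bsub>G\<^esub> v, w) 1 - Poly_Mapping.single (u, w) 1 - Poly_Mapping.single (v, w) 1
        | u v w. u \<in> carrier G \<and> v \<in> carrier G \<and> w \<in> carrier G}
   \<union> {Poly_Mapping.single (w, u \<otimes>\<^bsub>G\<^esub> v) 1 - Poly_Mapping.single (w, u) 1 - Poly_Mapping.single (w, v) 1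
        | u v w. u \<in> carrier G \<and> v \<in> carrier G \<and> w \<in> carrier G}"

definition free_sq :: "('a, 'b) monoid_scheme \<Rightarrow> (('a \<times> 'a) \<Rightarrow>\<^sub>0 int) monoid" where
  "free_sq G = free_Abelian_group (carrier G \<times> carrier G)"

definition tensor_sq :: "('a, 'b) monoid_scheme \<Rightarrow> (('a \<times> 'a) \<Rightarrow>\<^sub>0 int) set monoid" where
  "tensor_sq G = free_sq G Mod generate (free_sq G) (tensor_rels G)"

definition tens :: "('a, 'b) monoid_scheme \<Rightarrow> 'a \<Rightarrow> 'a \<Rightarrow> (('a \<times> 'a) \<Rightarrow>\<^sub>0 int) set" where
  "tens G u v = generate (free_sq G) (tensor_rels G) #>\<^bsub>free_sq G\<^esub> Poly_Mapping.single (u, v) 1"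

definition ext_rels :: "('a, 'b) monoid_scheme \<Rightarrow> (('a \<times> 'a) \<Rightarrow>\<^sub>0 int) set" where
  "ext_rels G = tensor_rels G \<union> {Poly_Mapping.single (v, v) 1 | v. v \<in> carrier G}"

definition ext_sq :: "('a, 'b) monoid_scheme \<Rightarrow> (('a \<times> 'a) \<Rightarrow>\<^sub>0 int) set monoid" where
  "ext_sq G = free_sq G Mod generate (free_sq G) (ext_rels G)"

definition wedge :: "('a, 'b) monoid_scheme \<Rightarrow> 'a \<Rightarrow> 'a \<Rightarrow> (('a \<times> 'a) \<Rightarrow>\<^sub>0 int) set" where
  "wedge G u v = generate (free_sq G) (ext_rels G) #>\<^bsub>free_sq G\<^esub> Poly_Mapping.single (u, v) 1"

definition sym_tensor_sq :: "('a, 'b) monoid_scheme \<Rightarrow> (('a \<times> 'a) \<Rightarrow>\<^sub>0 int) set monoid" where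
  "sym_tensor_sq G = subgroup_generated (tensor_sq G) ((\<lambda>v. tens G v v) ` carrier G)"

definition wedge_prod :: "('a, 'b) monoid_scheme \<Rightarrow> ((('a \<times> 'a) \<Rightarrow>\<^sub>0 int) set \<times> 'a) monoid" where
  "wedge_prod G =
     \<lparr>carrier = carrier (ext_sq G) \<times> carrier G,
      monoid.mult = (\<lambda>(s, g) (t, h).
         (s \<otimes>\<^bsub>ext_sq G\<^esub> t \<otimes>\<^bsub>ext_sq G\<^esub> wedge G g h, g \<otimes>\<^bsub>G\<^esub> h)),
      one = (\<one>\<^bsub>ext_sq G\<^esub>, \<one>\<^bsub>G\<^esub>)\<rparr>"

end

theory Submission
  imports Defs
begin

text \<open>Write \<open>G\<close> additively. The map \<open>\<phi>\<close> is a homomorphism because \<open>\<pi>(g \<and> h) = g \<otimes> h + h \<otimes> g\<close>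
  is exactly the cross term of \<open>(g + h) \<otimes> (g + h)\<close>, and it is onto because its image contains
  the generators \<open>v \<otimes> v\<close>. For injectivity, represent \<open>t\<close> by a formal sum \<open>f\<close> of pairs; then
  \<open>\<phi>(t, g) = 0\<close> says that \<open>f - f\<^sup>\<tau> + (g, g)\<close> is a bilinearity relation, where \<open>\<tau>\<close> swaps the
  two factors. Fix an \<open>\<bbbF>\<^sub>2\<close>-basis \<open>B\<close> of \<open>G\<close>. For \<open>b, b' \<in> B\<close> the form \<open>(x, y) \<mapsto> x\<^sub>b y\<^sub>b\<^sub>'\<close>
  is bilinear mod 2, so its linear extension is even on all bilinearity relations. For \<open>b = b'\<close> it
  vanishes on \<open>f - f\<^sup>\<tau>\<close> and returns \<open>g\<^sub>b\<close>, whence \<open>g = 0\<close>. Then \<open>f - f\<^sup>\<tau>\<close> is itself a relation,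
  so the expansion of \<open>f\<close> in the basis has a coefficient matrix that is antisymmetric mod 2; such a
  sum is a relation of the exterior square, i.e. \<open>t = 0\<close>.\<close>

lemma free_Abelian_group_normal:
  assumes "subgroup H (free_Abelian_group S)"
  shows "H \<lhd> free_Abelian_group S"
  by (rule comm_group.subgroup_imp_normal[OF abelian_free_Abelian_group assms])

lemma free_Abelian_rcos_carrier:
  assumes "Poly_Mapping.keys a \<subseteq> S"
  shows "H #>\<^bsub>free_Abelian_group S\<^esub> a \<in> carrier (free_Abelian_group S Mod H)"
  using assms by (auto simp: carrier_FactGroup)

lemma free_Abelian_rcos_mult:
  assumes "subgroup H (free_Abelian_group S)" "Poly_Mapping.keys a \<subseteq> S" "Poly_Mapping.keys b \<subseteq> S"
  shows "(H #>\<^bsub>free_Abelian_group S\<^esub> a) \<otimes>\<^bsub>free_Abelian_group S Mod H\<^esub> (H #>\<^bsub>free_Abelian_group S\<^esub> b)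
         = H #>\<^bsub>free_Abelian_group S\<^esub> (a + b)"
  using normal.rcos_sum[OF free_Abelian_group_normal[OF assms(1)], of a b] assms by simp

lemma free_Abelian_rcos_inv:
  assumes "subgroup H (free_Abelian_group S)" "Poly_Mapping.keys a \<subseteq> S"
  shows "inv\<^bsub>free_Abelian_group S Mod H\<^esub> (H #>\<^bsub>free_Abelian_group S\<^esub> a)
         = H #>\<^bsub>free_Abelian_group S\<^esub> (- a)"
  using normal.inv_FactGroup[OF free_Abelian_group_normal[OF assms(1)] free_Abelian_rcos_carrier[OF assms(2)]]
    normal.rcos_inv[OF free_Abelian_group_normal[OF assms(1)], of a] assms by simp

lemma free_Abelian_rcos_diff:
  assumes "subgroup H (free_Abelian_group S)" "Poly_Mapping.keys a \<subseteq> S" "Poly_Mapping.keys b \<subseteq> S"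
  shows "H #>\<^bsub>free_Abelian_group S\<^esub> (a - b)
         = (H #>\<^bsub>free_Abelian_group S\<^esub> a) \<otimes>\<^bsub>free_Abelian_group S Mod H\<^esub>
           inv\<^bsub>free_Abelian_group S Mod H\<^esub> (H #>\<^bsub>free_Abelian_group S\<^esub> b)"
  using free_Abelian_rcos_inv[OF assms(1,3)] free_Abelian_rcos_mult[OF assms(1,2), of "- b"] assms(3)
  by simp

lemma free_Abelian_rcos_eq_iff:
  assumes H: "subgroup H (free_Abelian_group S)" and "Poly_Mapping.keys a \<subseteq> S" "Poly_Mapping.keys b \<subseteq> S"
  shows "H #>\<^bsub>free_Abelian_group S\<^esub> a = H #>\<^bsub>free_Abelian_group S\<^esub> b \<longleftrightarrow> a - b \<in> H"
proof
  assume eq: "H #>\<^bsub>free_Abelian_group S\<^esub> a = H #>\<^bsub>free_Abelian_group S\<^esub> b"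
  have "a \<in> H #>\<^bsub>free_Abelian_group S\<^esub> a"
    using group.rcos_self[OF group_free_Abelian_group _ H] assms by simp
  then have "a \<in> H #>\<^bsub>free_Abelian_group S\<^esub> b" using eq by simp
  from subgroup.rcos_module_imp[OF H group_free_Abelian_group _ this] assms
  show "a - b \<in> H" by simp
next
  assume "a - b \<in> H"
  then have "a \<in> H #>\<^bsub>free_Abelian_group S\<^esub> b"
    using subgroup.rcos_module_rev[OF H group_free_Abelian_group, of b a] assms by simp
  from group.repr_independence[OF group_free_Abelian_group this _ H] assms
  show "H #>\<^bsub>free_Abelian_group S\<^esub> a = H #>\<^bsub>free_Abelian_group S\<^esub> b" by simp
qed

lemma free_Abelian_rcos_zero:
  assumes "subgroup H (free_Abelian_group S)"
  shows "H #>\<^bsub>free_Abelian_group S\<^esub> 0 = H"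
  using group.coset_mult_one[OF group_free_Abelian_group, of H S] subgroup.subset[OF assms]
  by simp

lemma free_Abelian_rcos_eq_subgroup_iff:
  assumes "subgroup H (free_Abelian_group S)" "Poly_Mapping.keys a \<subseteq> S"
  shows "H #>\<^bsub>free_Abelian_group S\<^esub> a = H \<longleftrightarrow> a \<in> H"
  using free_Abelian_rcos_eq_iff[OF assms(1,2), of 0] free_Abelian_rcos_zero[OF assms(1)] by simp

lemma free_Abelian_rcos_eq_mult:
  assumes H: "subgroup H (free_Abelian_group S)"
    and keys: "Poly_Mapping.keys a \<subseteq> S" "Poly_Mapping.keys b \<subseteq> S" "Poly_Mapping.keys c \<subseteq> S"
    and rel: "c - a - b \<in> H"
  shows "H #>\<^bsub>free_Abelian_group S\<^esub> c
         = (H #>\<^bsub>free_Abelian_group S\<^esub> a) \<otimes>\<^bsub>free_Abelian_group S Mod H\<^esub> (H #>\<^bsub>free_Abelian_group S\<^esub> b)"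
proof -
  have "Poly_Mapping.keys (a + b) \<subseteq> S" using keys_add[of a b] keys by blast
  then have "H #>\<^bsub>free_Abelian_group S\<^esub> c = H #>\<^bsub>free_Abelian_group S\<^esub> (a + b)"
    using free_Abelian_rcos_eq_iff[OF H keys(3)] rel by (simp add: diff_diff_eq)
  then show ?thesis using free_Abelian_rcos_mult[OF H keys(1,2)] by simp
qed

lemma comm_group_free_Abelian_Mod:
  assumes "subgroup H (free_Abelian_group S)"
  shows "comm_group (free_Abelian_group S Mod H)"
proof (rule group.group_comm_groupI)
  show "group (free_Abelian_group S Mod H)"
    by (rule normal.factorgroup_is_group[OF free_Abelian_group_normal[OF assms]])
  fix x y assume "x \<in> carrier (free_Abelian_group S Mod H)" "y \<in> carrier (free_Abelian_group S Mod H)"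
  then obtain a b where ab: "Poly_Mapping.keys a \<subseteq> S" "Poly_Mapping.keys b \<subseteq> S"
    "x = H #>\<^bsub>free_Abelian_group S\<^esub> a" "y = H #>\<^bsub>free_Abelian_group S\<^esub> b"
    by (auto simp: carrier_FactGroup)
  show "x \<otimes>\<^bsub>free_Abelian_group S Mod H\<^esub> y = y \<otimes>\<^bsub>free_Abelian_group S Mod H\<^esub> x"
    using free_Abelian_rcos_mult[OF assms ab(1,2)] free_Abelian_rcos_mult[OF assms ab(2,1)] ab(3,4)
    by (simp add: add.commute)
qed

lemma free_Abelian_subgroup_add:
  assumes "subgroup H (free_Abelian_group S)" "a \<in> H" "b \<in> H"
  shows "a + b \<in> H"
  using subgroup.m_closed[OF assms] by simp

lemma free_Abelian_subgroup_diff: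
  assumes H: "subgroup H (free_Abelian_group S)" and "a \<in> H" "b \<in> H"
  shows "a - b \<in> H"
proof -
  have "Poly_Mapping.keys b \<subseteq> S" using subgroup.mem_carrier[OF H \<open>b \<in> H\<close>] by simp
  then have "- b \<in> H" using subgroup.m_inv_closed[OF H \<open>b \<in> H\<close>] by simp
  then have "a + - b \<in> H" by (rule free_Abelian_subgroup_add[OF H \<open>a \<in> H\<close>])
  then show ?thesis by simp
qed

lemma free_Abelian_subgroup_uminus:
  assumes "subgroup H (free_Abelian_group S)" "a \<in> H"
  shows "- a \<in> H"
  using free_Abelian_subgroup_diff[OF assms(1) subgroup.one_closed[OF assms(1)] assms(2)] by simp

lemma free_Abelian_subgroup_cmul:
  assumes "subgroup H (free_Abelian_group S)" "a \<in> H"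
  shows "frag_cmul k a \<in> H"
  by (rule frag_closure_minus_cmul[where P="\<lambda>x. x \<in> H"])
     (use subgroup.one_closed[OF assms(1)] free_Abelian_subgroup_diff[OF assms(1)] assms(2) in auto)

lemma free_Abelian_subgroup_sum:
  assumes "subgroup H (free_Abelian_group S)" "\<And>i. i \<in> I \<Longrightarrow> g i \<in> H"
  shows "sum g I \<in> H"
  using assms(2)
proof (induction I rule: infinite_finite_induct)
  case (insert x F)
  then show ?case using free_Abelian_subgroup_add[OF assms(1)] by simp
qed (use subgroup.one_closed[OF assms(1)] in simp_all)

definition frag_swap :: "(('a \<times> 'a) \<Rightarrow>\<^sub>0 int) \<Rightarrow> (('a \<times> 'a) \<Rightarrow>\<^sub>0 int)" where
  "frag_swap f = frag_extend (\<lambda>(x, y). frag_of (y, x)) f"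

lemma frag_swap_diff: "frag_swap (a - b) = frag_swap a - frag_swap b"
  by (simp add: frag_swap_def frag_extend_diff)

lemma frag_swap_0 [simp]: "frag_swap 0 = 0"
  by (simp add: frag_swap_def)

lemma frag_swap_of [simp]: "frag_swap (frag_of (u, v)) = frag_of (v, u)"
  by (simp add: frag_swap_def)

lemma keys_diff_frag_swap:
  assumes "Poly_Mapping.keys f \<subseteq> S \<times> S"
  shows "Poly_Mapping.keys (f - frag_swap f) \<subseteq> S \<times> S"
proof -
  have "Poly_Mapping.keys (frag_swap f) \<subseteq> S \<times> S"
    unfolding frag_swap_def using keys_frag_extend[of "\<lambda>(x, y). frag_of (y, x)" f] assms by force
  then show ?thesis using keys_diff[of f "frag_swap f"] assms by blast
qed

text \<open>The \<open>\<int>\<close>-linear extension of \<open>\<beta>\<close> to formal sums.\<close>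

definition frag_eval :: "('k \<Rightarrow> int) \<Rightarrow> ('k \<Rightarrow>\<^sub>0 int) \<Rightarrow> int" where
  "frag_eval \<beta> h = Poly_Mapping.lookup (frag_extend (\<lambda>k. frag_cmul (\<beta> k) (frag_of ())) h) ()"

lemma frag_eval_add: "frag_eval \<beta> (a + b) = frag_eval \<beta> a + frag_eval \<beta> b"
  by (simp add: frag_eval_def frag_extend_add lookup_add)

lemma frag_eval_diff: "frag_eval \<beta> (a - b) = frag_eval \<beta> a - frag_eval \<beta> b"
  by (simp add: frag_eval_def frag_extend_diff lookup_minus)

lemma frag_eval_uminus: "frag_eval \<beta> (- a) = - frag_eval \<beta> a"
  by (simp add: frag_eval_def frag_extend_minus)

lemma frag_eval_0 [simp]: "frag_eval \<beta> 0 = 0"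
  by (simp add: frag_eval_def)

lemma frag_eval_of [simp]: "frag_eval \<beta> (frag_of k) = \<beta> k"
  by (simp add: frag_eval_def)

lemma frag_eval_swap: "frag_eval \<beta> (frag_swap f) = frag_eval (\<lambda>(x, y). \<beta> (y, x)) f"
  using subset_UNIV
proof (induction f rule: frag_induction)
  case (diff a b)
  then show ?case by (simp add: frag_swap_diff frag_eval_diff)
qed (auto simp: frag_swap_def)

lemma lookup_sum_frag_of_pairs:
  assumes "finite I" "finite J"
  shows "Poly_Mapping.lookup (\<Sum>x\<in>I. \<Sum>y\<in>J. frag_of (x, y)) (a, b) = (if a \<in> I \<and> b \<in> J then 1 else 0)"
proof -
  have "(\<Sum>y\<in>J. if a = x \<and> b = y then 1 else 0) = (if a = x then if b \<in> J then 1 else 0 else 0 :: int)" for x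
    by (cases "a = x") (simp_all add: sum.delta' assms)
  then show ?thesis by (simp add: lookup_sum lookup_single sum.delta' assms)
qed

lemma keys_sum_frag_of_pairs: "Poly_Mapping.keys (\<Sum>x\<in>I. \<Sum>y\<in>J. frag_of (x, y)) \<subseteq> I \<times> J"
proof
  fix p assume "p \<in> Poly_Mapping.keys (\<Sum>x\<in>I. \<Sum>y\<in>J. frag_of (x, y))"
  then obtain x where x: "x \<in> I" "p \<in> Poly_Mapping.keys (\<Sum>y\<in>J. frag_of (x, y))"
    by (blast dest: subsetD[OF keys_sum])
  then obtain y where "y \<in> J" "p \<in> Poly_Mapping.keys (frag_of (x, y))"
    by (blast dest: subsetD[OF keys_sum])
  with x show "p \<in> I \<times> J" by simp
qed

locale tensor_square = group G for G (structure)
begin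

abbreviation "pairs \<equiv> carrier G \<times> carrier G"
abbreviation "free_pairs \<equiv> free_Abelian_group pairs"
abbreviation "tensor_kernel \<equiv> generate free_pairs (tensor_rels G)"
abbreviation "wedge_kernel \<equiv> generate free_pairs (ext_rels G)"

lemma tensor_sq_Mod: "tensor_sq G = free_pairs Mod tensor_kernel"
  by (simp add: tensor_sq_def free_sq_def)

lemma ext_sq_Mod: "ext_sq G = free_pairs Mod wedge_kernel"
  by (simp add: ext_sq_def free_sq_def)

lemma tens_rcos: "tens G u v = tensor_kernel #>\<^bsub>free_pairs\<^esub> frag_of (u, v)"
  by (simp add: tens_def free_sq_def)

lemma wedge_rcos: "wedge G u v = wedge_kernel #>\<^bsub>free_pairs\<^esub> frag_of (u, v)"
  by (simp add: wedge_def free_sq_def)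

lemma tensor_rels_subset: "tensor_rels G \<subseteq> carrier free_pairs"
proof -
  have "Poly_Mapping.keys (frag_of a - frag_of b - frag_of c) \<subseteq> {a, b, c}" for a b c :: "'a \<times> 'a"
    using keys_diff[of "frag_of a - frag_of b" "frag_of c"] keys_diff[of "frag_of a" "frag_of b"] by auto
  then show ?thesis unfolding tensor_rels_def by fastforce
qed

lemma ext_rels_subset: "ext_rels G \<subseteq> carrier free_pairs"
  using tensor_rels_subset unfolding ext_rels_def by auto

lemma subgroup_tensor_kernel: "subgroup tensor_kernel free_pairs"
  by (rule group.generate_is_subgroup[OF group_free_Abelian_group tensor_rels_subset])

lemma subgroup_wedge_kernel: "subgroup wedge_kernel free_pairs"
  by (rule group.generate_is_subgroup[OF group_free_Abelian_group ext_rels_subset])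

lemma tensor_kernel_subset_wedge_kernel: "tensor_kernel \<subseteq> wedge_kernel"
  by (rule group.mono_generate[OF group_free_Abelian_group]) (auto simp: ext_rels_def)

lemma tensor_rel_left:
  "u \<in> carrier G \<Longrightarrow> v \<in> carrier G \<Longrightarrow> w \<in> carrier G \<Longrightarrow>
   frag_of (u \<otimes> v, w) - frag_of (u, w) - frag_of (v, w) \<in> tensor_kernel"
  by (rule generate.incl) (auto simp: tensor_rels_def)

lemma tensor_rel_right:
  "u \<in> carrier G \<Longrightarrow> v \<in> carrier G \<Longrightarrow> w \<in> carrier G \<Longrightarrow>
   frag_of (w, u \<otimes> v) - frag_of (w, u) - frag_of (w, v) \<in> tensor_kernel"
  by (rule generate.incl) (auto simp: tensor_rels_def)

lemma diag_in_wedge_kernel: "v \<in> carrier G \<Longrightarrow> frag_of (v, v) \<in> wedge_kernel"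
  by (rule generate.incl) (auto simp: ext_rels_def)

lemma one_left_in_tensor_kernel: "v \<in> carrier G \<Longrightarrow> frag_of (\<one>, v) \<in> tensor_kernel"
  using free_Abelian_subgroup_uminus[OF subgroup_tensor_kernel tensor_rel_left[of \<one> \<one> v]] by simp

lemma one_right_in_tensor_kernel: "v \<in> carrier G \<Longrightarrow> frag_of (v, \<one>) \<in> tensor_kernel"
  using free_Abelian_subgroup_uminus[OF subgroup_tensor_kernel tensor_rel_right[of \<one> \<one> v]] by simp

text \<open>Expand \<open>(u + v) \<and> (u + v) = 0\<close> by bilinearity.\<close>

lemma swap_sum_in_wedge_kernel:
  assumes u: "u \<in> carrier G" and v: "v \<in> carrier G"
  shows "frag_of (u, v) + frag_of (v, u) \<in> wedge_kernel"
proof -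
  define r1 where "r1 = frag_of (u \<otimes> v, u \<otimes> v) - frag_of (u, u \<otimes> v) - frag_of (v, u \<otimes> v)"
  define r2 where "r2 = frag_of (u, u \<otimes> v) - frag_of (u, u) - frag_of (u, v)"
  define r3 where "r3 = frag_of (v, u \<otimes> v) - frag_of (v, u) - frag_of (v, v)"
  have "r1 \<in> wedge_kernel" "r2 \<in> wedge_kernel" "r3 \<in> wedge_kernel"
    using tensor_rel_left[of u v "u \<otimes> v"] tensor_rel_right[of u v u] tensor_rel_right[of u v v]
      tensor_kernel_subset_wedge_kernel u v
    by (auto simp: r1_def r2_def r3_def)
  moreover have "frag_of (u \<otimes> v, u \<otimes> v) \<in> wedge_kernel" "frag_of (u, u) \<in> wedge_kernel"
    "frag_of (v, v) \<in> wedge_kernel"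
    using diag_in_wedge_kernel u v by auto
  moreover have "frag_of (u, v) + frag_of (v, u) =
     frag_of (u \<otimes> v, u \<otimes> v) - r1 - r2 - r3 - frag_of (u, u) - frag_of (v, v)"
    by (simp add: r1_def r2_def r3_def algebra_simps)
  ultimately show ?thesis
    by (metis free_Abelian_subgroup_diff[OF subgroup_wedge_kernel])
qed

lemma comm_group_tensor_sq: "comm_group (tensor_sq G)"
  unfolding tensor_sq_Mod by (rule comm_group_free_Abelian_Mod[OF subgroup_tensor_kernel])

lemma comm_group_ext_sq: "comm_group (ext_sq G)"
  unfolding ext_sq_Mod by (rule comm_group_free_Abelian_Mod[OF subgroup_wedge_kernel])

lemma tens_carrier: "u \<in> carrier G \<Longrightarrow> v \<in> carrier G \<Longrightarrow> tens G u v \<in> carrier (tensor_sq G)"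
  unfolding tens_rcos tensor_sq_Mod by (rule free_Abelian_rcos_carrier) simp

lemma wedge_carrier: "u \<in> carrier G \<Longrightarrow> v \<in> carrier G \<Longrightarrow> wedge G u v \<in> carrier (ext_sq G)"
  unfolding wedge_rcos ext_sq_Mod by (rule free_Abelian_rcos_carrier) simp

lemma tens_mult_left:
  assumes "u \<in> carrier G" "v \<in> carrier G" "w \<in> carrier G"
  shows "tens G (u \<otimes> v) w = tens G u w \<otimes>\<^bsub>tensor_sq G\<^esub> tens G v w"
  unfolding tens_rcos tensor_sq_Mod
  by (rule free_Abelian_rcos_eq_mult[OF subgroup_tensor_kernel])
     (use assms tensor_rel_left[OF assms] in simp_all)

lemma tens_mult_right:
  assumes "u \<in> carrier G" "v \<in> carrier G" "w \<in> carrier G"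
  shows "tens G w (u \<otimes> v) = tens G w u \<otimes>\<^bsub>tensor_sq G\<^esub> tens G w v"
  unfolding tens_rcos tensor_sq_Mod
  by (rule free_Abelian_rcos_eq_mult[OF subgroup_tensor_kernel])
     (use assms tensor_rel_right[OF assms] in simp_all)

lemma wedge_mult_left:
  assumes "u \<in> carrier G" "v \<in> carrier G" "w \<in> carrier G"
  shows "wedge G (u \<otimes> v) w = wedge G u w \<otimes>\<^bsub>ext_sq G\<^esub> wedge G v w"
  unfolding wedge_rcos ext_sq_Mod
  by (rule free_Abelian_rcos_eq_mult[OF subgroup_wedge_kernel])
     (use assms tensor_rel_left[OF assms] tensor_kernel_subset_wedge_kernel in auto)

lemma wedge_mult_right:
  assumes "u \<in> carrier G" "v \<in> carrier G" "w \<in> carrier G"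
  shows "wedge G w (u \<otimes> v) = wedge G w u \<otimes>\<^bsub>ext_sq G\<^esub> wedge G w v"
  unfolding wedge_rcos ext_sq_Mod
  by (rule free_Abelian_rcos_eq_mult[OF subgroup_wedge_kernel])
     (use assms tensor_rel_right[OF assms] tensor_kernel_subset_wedge_kernel in auto)

lemma wedge_self: "v \<in> carrier G \<Longrightarrow> wedge G v v = \<one>\<^bsub>ext_sq G\<^esub>"
  unfolding wedge_rcos ext_sq_Mod
  using free_Abelian_rcos_eq_subgroup_iff[OF subgroup_wedge_kernel, of "frag_of (v, v)"]
    diag_in_wedge_kernel
  by simp

lemma wedge_one_left: "v \<in> carrier G \<Longrightarrow> wedge G \<one> v = \<one>\<^bsub>ext_sq G\<^esub>"
  unfolding wedge_rcos ext_sq_Mod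
  using free_Abelian_rcos_eq_subgroup_iff[OF subgroup_wedge_kernel, of "frag_of (\<one>, v)"]
    one_left_in_tensor_kernel tensor_kernel_subset_wedge_kernel
  by auto

lemma wedge_inv_left: "v \<in> carrier G \<Longrightarrow> wedge G (inv v) v = \<one>\<^bsub>ext_sq G\<^esub>"
  using wedge_mult_left[of "inv v" v v] comm_group.axioms(2)[OF comm_group_ext_sq]
  by (simp add: wedge_one_left wedge_self wedge_carrier group.is_monoid monoid.r_one)

lemma wedge_prod_carrier: "carrier (wedge_prod G) = carrier (ext_sq G) \<times> carrier G"
  by (simp add: wedge_prod_def)

lemma wedge_prod_mult:
  "(s, g) \<otimes>\<^bsub>wedge_prod G\<^esub> (t, h) = (s \<otimes>\<^bsub>ext_sq G\<^esub> t \<otimes>\<^bsub>ext_sq G\<^esub> wedge G g h, g \<otimes> h)"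
  by (simp add: wedge_prod_def)

lemma wedge_prod_one: "\<one>\<^bsub>wedge_prod G\<^esub> = (\<one>\<^bsub>ext_sq G\<^esub>, \<one>)"
  by (simp add: wedge_prod_def)

lemma group_wedge_prod: "group (wedge_prod G)"
proof -
  interpret E: comm_group "ext_sq G" by (rule comm_group_ext_sq)
  show ?thesis
  proof (rule groupI, simp_all only: wedge_prod_carrier wedge_prod_one split_paired_all)
    fix s g t h
    assume "(s, g) \<in> carrier (ext_sq G) \<times> carrier G" "(t, h) \<in> carrier (ext_sq G) \<times> carrier G"
    then show "(s, g) \<otimes>\<^bsub>wedge_prod G\<^esub> (t, h) \<in> carrier (ext_sq G) \<times> carrier G"
      by (simp add: wedge_prod_mult wedge_carrier)
  next
    fix s g t h r k
    assume "(s, g) \<in> carrier (ext_sq G) \<times> carrier G" "(t, h) \<in> carrier (ext_sq G) \<times> carrier G"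
      "(r, k) \<in> carrier (ext_sq G) \<times> carrier G"
    then show "(s, g) \<otimes>\<^bsub>wedge_prod G\<^esub> (t, h) \<otimes>\<^bsub>wedge_prod G\<^esub> (r, k)
               = (s, g) \<otimes>\<^bsub>wedge_prod G\<^esub> ((t, h) \<otimes>\<^bsub>wedge_prod G\<^esub> (r, k))"
      by (simp add: wedge_prod_mult wedge_mult_left wedge_mult_right wedge_carrier m_assoc E.m_ac)
  next
    fix s g assume "(s, g) \<in> carrier (ext_sq G) \<times> carrier G"
    then show "(\<one>\<^bsub>ext_sq G\<^esub>, \<one>) \<otimes>\<^bsub>wedge_prod G\<^esub> (s, g) = (s, g)"
      by (simp add: wedge_prod_mult wedge_one_left)
  next
    fix s g assume "(s, g) \<in> carrier (ext_sq G) \<times> carrier G"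
    then show "\<exists>y\<in>carrier (ext_sq G) \<times> carrier G. y \<otimes>\<^bsub>wedge_prod G\<^esub> (s, g) = (\<one>\<^bsub>ext_sq G\<^esub>, \<one>)"
      by (intro bexI[of _ "(inv\<^bsub>ext_sq G\<^esub> s, inv g)"]) (simp_all add: wedge_prod_mult wedge_inv_left)
  qed simp
qed

definition bilinear_mod2 :: "('a \<times> 'a \<Rightarrow> int) \<Rightarrow> bool" where
  "bilinear_mod2 \<beta> \<longleftrightarrow> (\<forall>u\<in>carrier G. \<forall>v\<in>carrier G. \<forall>w\<in>carrier G.
      even (\<beta> (u \<otimes> v, w) - \<beta> (u, w) - \<beta> (v, w)) \<and> even (\<beta> (w, u \<otimes> v) - \<beta> (w, u) - \<beta> (w, v)))"

lemma even_frag_eval_tensor_kernel: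
  assumes "bilinear_mod2 \<beta>" "h \<in> tensor_kernel"
  shows "even (frag_eval \<beta> h)"
  using assms(2)
proof (induction rule: generate.induct)
  case (incl h)
  then show ?case using assms(1) by (auto simp: tensor_rels_def bilinear_mod2_def frag_eval_diff)
next
  case (inv h)
  then have "inv\<^bsub>free_pairs\<^esub> h = - h" using tensor_rels_subset by auto
  moreover have "even (frag_eval \<beta> h)"
    using inv assms(1) by (auto simp: tensor_rels_def bilinear_mod2_def frag_eval_diff)
  ultimately show ?case by (simp add: frag_eval_uminus)
next
  case (eng h1 h2)
  then show ?case by (simp add: frag_eval_add)
qed simp

end

locale elementary_abelian_2_group = comm_group G for G (structure) +
  assumes mult_self_eq_one: "x \<in> carrier G \<Longrightarrow> x \<otimes> x = \<one>"

sublocale elementary_abelian_2_group \<subseteq> tensor_square ..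

context elementary_abelian_2_group
begin

lemma double_in_tensor_kernel:
  "u \<in> carrier G \<Longrightarrow> v \<in> carrier G \<Longrightarrow> frag_of (u, v) + frag_of (u, v) \<in> tensor_kernel"
  using free_Abelian_subgroup_diff[OF subgroup_tensor_kernel one_left_in_tensor_kernel[of v]
      tensor_rel_left[of u u v]]
  by (simp add: mult_self_eq_one)

lemma tens_mult_self:
  assumes "u \<in> carrier G" "v \<in> carrier G"
  shows "tens G u v \<otimes>\<^bsub>tensor_sq G\<^esub> tens G u v = \<one>\<^bsub>tensor_sq G\<^esub>"
proof -
  have "Poly_Mapping.keys (frag_of (u, v) + frag_of (u, v)) \<subseteq> pairs"
    using assms keys_add[of "frag_of (u, v)" "frag_of (u, v)"] by auto
  then show ?thesis
    unfolding tens_rcos tensor_sq_Mod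
    using free_Abelian_rcos_mult[OF subgroup_tensor_kernel] free_Abelian_rcos_eq_subgroup_iff[OF subgroup_tensor_kernel]
      double_in_tensor_kernel[OF assms] assms
    by simp
qed

abbreviation prod_set :: "'a set \<Rightarrow> 'a" where
  "prod_set S \<equiv> finprod G (\<lambda>x. x) S"

lemma prod_set_closed: "S \<subseteq> carrier G \<Longrightarrow> prod_set S \<in> carrier G"
  by (rule finprod_closed) auto

lemma prod_set_mult_self:
  assumes "S \<subseteq> carrier G"
  shows "prod_set S \<otimes> prod_set S = \<one>"
proof -
  have "prod_set S \<otimes> prod_set S = finprod G (\<lambda>x. x \<otimes> x) S"
    using assms by (subst finprod_multf) auto
  also have "\<dots> = \<one>" by (rule finprod_one_eqI) (use assms mult_self_eq_one in auto)
  finally show ?thesis .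
qed

lemma prod_set_sym_diff:
  assumes "finite S" "finite T" "S \<subseteq> carrier G" "T \<subseteq> carrier G"
  shows "prod_set (sym_diff S T) = prod_set S \<otimes> prod_set T"
proof -
  have split: "prod_set (A \<union> B) = prod_set A \<otimes> prod_set B"
    if "finite A" "finite B" "A \<inter> B = {}" "A \<subseteq> carrier G" "B \<subseteq> carrier G" for A B
    using finprod_Un_disjoint[of A B "\<lambda>x. x"] that by auto
  have "(S - T) \<union> (S \<inter> T) = S" "(T - S) \<union> (S \<inter> T) = T" by blast+
  then have S: "prod_set S = prod_set (S - T) \<otimes> prod_set (S \<inter> T)"
    and T: "prod_set T = prod_set (T - S) \<otimes> prod_set (S \<inter> T)"
    using split[of "S - T" "S \<inter> T"] split[of "T - S" "S \<inter> T"] assms by auto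
  have closed: "prod_set (S - T) \<in> carrier G" "prod_set (T - S) \<in> carrier G"
    "prod_set (S \<inter> T) \<in> carrier G"
    using assms by (auto intro!: prod_set_closed)
  have "prod_set S \<otimes> prod_set T
        = (prod_set (S - T) \<otimes> prod_set (T - S)) \<otimes> (prod_set (S \<inter> T) \<otimes> prod_set (S \<inter> T))"
    using closed by (simp add: S T m_ac)
  also have "\<dots> = prod_set (S - T) \<otimes> prod_set (T - S)"
    using prod_set_mult_self[of "S \<inter> T"] assms closed by auto
  also have "\<dots> = prod_set (sym_diff S T)"
    by (rule split[symmetric]) (use assms in auto)
  finally show ?thesis ..
qed

definition independent :: "'a set \<Rightarrow> bool" where
  "independent I \<longleftrightarrow> I \<subseteq> carrier G \<and> (\<forall>S. finite S \<and> S \<subseteq> I \<and> prod_set S = \<one> \<longrightarrow> S = {})"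

lemma maximal_independent_exists:
  "\<exists>B\<in>{I. independent I}. \<forall>Z\<in>{I. independent I}. B \<subseteq> Z \<longrightarrow> Z = B"
proof (rule subset_Zorn)
  fix C assume chain: "subset.chain {I. independent I} C"
  have "independent (\<Union>C)"
    unfolding independent_def
  proof (intro conjI allI impI)
    show "\<Union>C \<subseteq> carrier G" using chain by (auto simp: subset_chain_def independent_def)
    fix S assume S: "finite S \<and> S \<subseteq> \<Union>C \<and> prod_set S = \<one>"
    show "S = {}"
    proof (cases "C = {}")
      case False
      obtain B where "B \<in> C" "S \<subseteq> B"
        using finite_subset_Union_chain[of S C] S False chain by blast
      then show ?thesis using S chain by (auto simp: subset_chain_def independent_def)
    qed (use S in auto)
  qed
  then show "\<exists>U\<in>{I. independent I}. \<forall>Z\<in>C. Z \<subseteq> U" by blast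
qed

lemma independent_prod_set_inj:
  assumes B: "independent B"
    and S: "finite S" "S \<subseteq> B" and T: "finite T" "T \<subseteq> B"
    and eq: "prod_set S = prod_set T"
  shows "S = T"
proof -
  have ST: "S \<subseteq> carrier G" "T \<subseteq> carrier G" using S T B by (auto simp: independent_def)
  have "prod_set (sym_diff S T) = prod_set S \<otimes> prod_set T"
    by (rule prod_set_sym_diff) (use S T ST in auto)
  also have "\<dots> = \<one>" using eq prod_set_mult_self[OF ST(1)] by simp
  finally have "prod_set (sym_diff S T) = \<one>" .
  moreover have "finite (sym_diff S T)" "sym_diff S T \<subseteq> B" using S T by auto
  ultimately have "sym_diff S T = {}" using B unfolding independent_def by blast
  then show ?thesis by blast
qed

lemma maximal_independent_spans:
  assumes B: "independent B" and maximal: "\<And>Z. independent Z \<Longrightarrow> B \<subseteq> Z \<Longrightarrow> Z = B"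
    and x: "x \<in> carrier G"
  shows "\<exists>S. finite S \<and> S \<subseteq> B \<and> prod_set S = x"
proof (rule ccontr)
  assume not_spanned: "\<nexists>S. finite S \<and> S \<subseteq> B \<and> prod_set S = x"
  have B_carrier: "B \<subseteq> carrier G" using B by (simp add: independent_def)
  have "independent (insert x B)"
    unfolding independent_def
  proof (intro conjI allI impI)
    show "insert x B \<subseteq> carrier G" using x B_carrier by auto
    fix S assume S: "finite S \<and> S \<subseteq> insert x B \<and> prod_set S = \<one>"
    show "S = {}"
    proof (cases "x \<in> S")
      case True
      define S' where "S' = S - {x}"
      have S': "finite S'" "S' \<subseteq> B" "x \<notin> S'" "S = insert x S'"
        using S True by (auto simp: S'_def)
      have S'_closed: "prod_set S' \<in> carrier G" using S' B_carrier by (auto intro!: prod_set_closed)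
      have "prod_set (insert x S') = x \<otimes> prod_set S'"
        by (rule finprod_insert) (use S' x B_carrier in auto)
      then have "x \<otimes> prod_set S' = \<one>" using S S'(4) by simp
      have "x = x \<otimes> (prod_set S' \<otimes> prod_set S')"
        using prod_set_mult_self[of S'] S'(2) B_carrier x by auto
      also have "\<dots> = prod_set S'"
        using \<open>x \<otimes> prod_set S' = \<one>\<close> S'_closed x by (simp flip: m_assoc)
      finally show ?thesis using not_spanned S'(1,2) by blast
    next
      case False
      then show ?thesis using B S unfolding independent_def by blast
    qed
  qed
  then have "x \<in> B" using maximal by blast
  moreover have "prod_set {x} = x" using x by simp
  ultimately show False using not_spanned by blast
qed

lemma frag_of_prod_set_left:
  assumes "finite S" "S \<subseteq> carrier G" "y \<in> carrier G"
  shows "frag_of (prod_set S, y) - (\<Sum>b\<in>S. frag_of (b, y)) \<in> tensor_kernel"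
  using assms(1,2)
proof (induction S rule: finite_induct)
  case empty
  then show ?case using one_left_in_tensor_kernel[OF assms(3)] by simp
next
  case (insert b S)
  have b: "b \<in> carrier G" and S: "S \<subseteq> carrier G" using insert.prems by auto
  have "prod_set (insert b S) = b \<otimes> prod_set S"
    by (rule finprod_insert) (use insert.hyps b S in auto)
  then have "frag_of (prod_set (insert b S), y) - (\<Sum>b\<in>insert b S. frag_of (b, y))
      = (frag_of (b \<otimes> prod_set S, y) - frag_of (b, y) - frag_of (prod_set S, y))
        + (frag_of (prod_set S, y) - (\<Sum>b\<in>S. frag_of (b, y)))"
    using insert.hyps by (simp add: algebra_simps)
  also have "\<dots> \<in> tensor_kernel"
    by (rule free_Abelian_subgroup_add[OF subgroup_tensor_kernel tensor_rel_left[OF b prod_set_closed[OF S] assms(3)]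
          insert.IH[OF S]])
  finally show ?case .
qed

lemma frag_of_prod_set_right:
  assumes "finite S" "S \<subseteq> carrier G" "y \<in> carrier G"
  shows "frag_of (y, prod_set S) - (\<Sum>b\<in>S. frag_of (y, b)) \<in> tensor_kernel"
  using assms(1,2)
proof (induction S rule: finite_induct)
  case empty
  then show ?case using one_right_in_tensor_kernel[OF assms(3)] by simp
next
  case (insert b S)
  have b: "b \<in> carrier G" and S: "S \<subseteq> carrier G" using insert.prems by auto
  have "prod_set (insert b S) = b \<otimes> prod_set S"
    by (rule finprod_insert) (use insert.hyps b S in auto)
  then have "frag_of (y, prod_set (insert b S)) - (\<Sum>b\<in>insert b S. frag_of (y, b))
      = (frag_of (y, b \<otimes> prod_set S) - frag_of (y, b) - frag_of (y, prod_set S))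
        + (frag_of (y, prod_set S) - (\<Sum>b\<in>S. frag_of (y, b)))"
    using insert.hyps by (simp add: algebra_simps)
  also have "\<dots> \<in> tensor_kernel"
    by (rule free_Abelian_subgroup_add[OF subgroup_tensor_kernel tensor_rel_right[OF b prod_set_closed[OF S] assms(3)]
          insert.IH[OF S]])
  finally show ?case .
qed

lemma cmul_swap_pair_in_wedge_kernel:
  assumes "a \<in> carrier G" "a' \<in> carrier G" "even (x - y)"
  shows "frag_cmul x (frag_of (a, a')) + frag_cmul y (frag_of (a', a)) \<in> wedge_kernel"
proof -
  obtain k where "x - y = 2 * k" using assms(3) by (rule evenE)
  then have x: "x = y + 2 * k" by simp
  have "frag_cmul x (frag_of (a, a')) + frag_cmul y (frag_of (a', a))
        = frag_cmul y (frag_of (a, a') + frag_of (a', a)) + frag_cmul k (frag_of (a, a') + frag_of (a, a'))"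
    by (intro poly_mapping_eqI) (simp add: x lookup_add algebra_simps)
  moreover have "frag_cmul y (frag_of (a, a') + frag_of (a', a)) \<in> wedge_kernel"
    by (rule free_Abelian_subgroup_cmul[OF subgroup_wedge_kernel swap_sum_in_wedge_kernel[OF assms(1,2)]])
  moreover have "frag_cmul k (frag_of (a, a') + frag_of (a, a')) \<in> wedge_kernel"
    using free_Abelian_subgroup_cmul[OF subgroup_wedge_kernel] double_in_tensor_kernel[OF assms(1,2)]
      tensor_kernel_subset_wedge_kernel
    by blast
  ultimately show ?thesis using free_Abelian_subgroup_add[OF subgroup_wedge_kernel] by simp
qed

lemma antisym_mod2_in_wedge_kernel:
  assumes "Poly_Mapping.keys h \<subseteq> pairs"
    and "\<And>a a'. even (Poly_Mapping.lookup h (a, a') - Poly_Mapping.lookup h (a', a))"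
  shows "h \<in> wedge_kernel"
  using assms
proof (induction "card (Poly_Mapping.keys h)" arbitrary: h rule: less_induct)
  case less
  show ?case
  proof (cases "h = 0")
    case True
    then show ?thesis using subgroup.one_closed[OF subgroup_wedge_kernel] by simp
  next
    case False
    then obtain p where p: "p \<in> Poly_Mapping.keys h" using keys_eq_empty by blast
    obtain a a' where aa': "p = (a, a')" by (cases p)
    have carrier: "a \<in> carrier G" "a' \<in> carrier G" using p aa' less.prems(1) by auto
    define x where "x = Poly_Mapping.lookup h (a, a')"
    define y where "y = Poly_Mapping.lookup h (a', a)"
    define d where "d = frag_cmul x (frag_of (a, a')) + (if a = a' then 0 else frag_cmul y (frag_of (a', a)))"
    have lookup_rest: "Poly_Mapping.lookup (h - d) q
                       = (if q = (a, a') \<or> q = (a', a) then 0 else Poly_Mapping.lookup h q)" for q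
      by (auto simp: d_def x_def y_def lookup_minus lookup_add lookup_single)
    have keys_rest: "Poly_Mapping.keys (h - d) = Poly_Mapping.keys h - {(a, a'), (a', a)}"
    proof -
      have "q \<in> Poly_Mapping.keys (h - d) \<longleftrightarrow> q \<in> Poly_Mapping.keys h - {(a, a'), (a', a)}" for q
        by (simp add: lookup_rest in_keys_iff)
      then show ?thesis by blast
    qed
    have "h - d \<in> wedge_kernel"
    proof (rule less.hyps)
      show "card (Poly_Mapping.keys (h - d)) < card (Poly_Mapping.keys h)"
        unfolding keys_rest by (rule psubset_card_mono) (use p aa' in auto)
      show "Poly_Mapping.keys (h - d) \<subseteq> pairs" using keys_rest less.prems(1) by blast
      show "even (Poly_Mapping.lookup (h - d) (b, b') - Poly_Mapping.lookup (h - d) (b', b))" for b b'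
        using less.prems(2)[of b b'] by (simp add: lookup_rest)
    qed
    moreover have "d \<in> wedge_kernel"
    proof (cases "a = a'")
      case True
      then show ?thesis
        using free_Abelian_subgroup_cmul[OF subgroup_wedge_kernel diag_in_wedge_kernel[OF carrier(1)]]
        by (simp add: d_def)
    next
      case False
      then show ?thesis
        using cmul_swap_pair_in_wedge_kernel[OF carrier less.prems(2)[of a a']]
        by (simp add: d_def x_def y_def)
    qed
    ultimately have "(h - d) + d \<in> wedge_kernel"
      by (rule free_Abelian_subgroup_add[OF subgroup_wedge_kernel])
    then show ?thesis by simp
  qed
qed

end

text \<open>\<open>B\<close> is an \<open>\<bbbF>\<^sub>2\<close>-basis of \<open>G\<close> and \<open>coords x\<close> is the support of \<open>x\<close> in it.\<close>

locale elementary_abelian_2_group_basis = elementary_abelian_2_group +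
  fixes B :: "'a set" and coords :: "'a \<Rightarrow> 'a set"
  assumes basis_subset_carrier: "B \<subseteq> carrier G"
    and finite_coords: "x \<in> carrier G \<Longrightarrow> finite (coords x)"
    and coords_subset_basis: "x \<in> carrier G \<Longrightarrow> coords x \<subseteq> B"
    and prod_set_coords: "x \<in> carrier G \<Longrightarrow> prod_set (coords x) = x"
    and coords_mult: "x \<in> carrier G \<Longrightarrow> y \<in> carrier G \<Longrightarrow> coords (x \<otimes> y) = sym_diff (coords x) (coords y)"
begin

lemma coords_subset_carrier: "x \<in> carrier G \<Longrightarrow> coords x \<subseteq> carrier G"
  using coords_subset_basis basis_subset_carrier by blast

definition coord :: "'a \<Rightarrow> 'a \<Rightarrow> int" where
  "coord b x = (if b \<in> coords x then 1 else 0)"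

definition coord_pair :: "'a \<Rightarrow> 'a \<Rightarrow> 'a \<times> 'a \<Rightarrow> int" where
  "coord_pair b b' = (\<lambda>(x, y). coord b x * coord b' y)"

lemma even_coord_mult:
  "x \<in> carrier G \<Longrightarrow> y \<in> carrier G \<Longrightarrow> even (coord b (x \<otimes> y) - coord b x - coord b y)"
  by (simp add: coord_def coords_mult)

lemma bilinear_mod2_coord_pair: "bilinear_mod2 (coord_pair b b')"
  unfolding bilinear_mod2_def
proof (intro ballI conjI)
  fix u v w assume "u \<in> carrier G" "v \<in> carrier G" "w \<in> carrier G"
  then have "even ((coord b (u \<otimes> v) - coord b u - coord b v) * coord b' w)"
    and "even (coord b w * (coord b' (u \<otimes> v) - coord b' u - coord b' v))"
    using even_coord_mult by auto
  then show "even (coord_pair b b' (u \<otimes> v, w) - coord_pair b b' (u, w) - coord_pair b b' (v, w))"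
    and "even (coord_pair b b' (w, u \<otimes> v) - coord_pair b b' (w, u) - coord_pair b b' (w, v))"
    by (simp_all add: coord_pair_def algebra_simps)
qed

lemma coord_pair_swap: "(\<lambda>(x, y). coord_pair b b' (y, x)) = coord_pair b' b"
  by (auto simp: coord_pair_def)

definition expand :: "(('a \<times> 'a) \<Rightarrow>\<^sub>0 int) \<Rightarrow> (('a \<times> 'a) \<Rightarrow>\<^sub>0 int)" where
  "expand f = frag_extend (\<lambda>(x, y). \<Sum>b\<in>coords x. \<Sum>b'\<in>coords y. frag_of (b, b')) f"

lemma expand_diff: "expand (a - b) = expand a - expand b"
  by (simp add: expand_def frag_extend_diff)

lemma frag_of_diff_expand_in_tensor_kernel:
  assumes x: "x \<in> carrier G" and y: "y \<in> carrier G"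
  shows "frag_of (x, y) - expand (frag_of (x, y)) \<in> tensor_kernel"
proof -
  define A where "A = (\<Sum>b\<in>coords x. frag_of (b, y))"
  have left: "frag_of (x, y) - A \<in> tensor_kernel"
    using frag_of_prod_set_left[OF finite_coords[OF x] coords_subset_carrier[OF x] y]
    unfolding prod_set_coords[OF x] A_def .
  have "A - expand (frag_of (x, y))
        = (\<Sum>b\<in>coords x. frag_of (b, y) - (\<Sum>b'\<in>coords y. frag_of (b, b')))"
    by (simp add: A_def expand_def sum_subtractf)
  also have "\<dots> \<in> tensor_kernel"
  proof (rule free_Abelian_subgroup_sum[OF subgroup_tensor_kernel])
    fix b assume "b \<in> coords x"
    then have "b \<in> carrier G" using coords_subset_carrier[OF x] by blast
    from frag_of_prod_set_right[OF finite_coords[OF y] coords_subset_carrier[OF y] this]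
    show "frag_of (b, y) - (\<Sum>b'\<in>coords y. frag_of (b, b')) \<in> tensor_kernel"
      unfolding prod_set_coords[OF y] .
  qed
  finally have "A - expand (frag_of (x, y)) \<in> tensor_kernel" .
  with left have "(frag_of (x, y) - A) + (A - expand (frag_of (x, y))) \<in> tensor_kernel"
    by (rule free_Abelian_subgroup_add[OF subgroup_tensor_kernel])
  then show ?thesis by simp
qed

lemma diff_expand_in_tensor_kernel:
  assumes "Poly_Mapping.keys f \<subseteq> pairs"
  shows "f - expand f \<in> tensor_kernel"
  using assms
proof (induction f rule: free_Abelian_group_induct[consumes 1, case_names zero diff frag_of])
  case zero
  then show ?case using subgroup.one_closed[OF subgroup_tensor_kernel] by (simp add: expand_def)
next
  case (diff x y)
  then have "(x - expand x) - (y - expand y) \<in> tensor_kernel"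
    using free_Abelian_subgroup_diff[OF subgroup_tensor_kernel] by blast
  then show ?case by (simp add: expand_diff algebra_simps)
next
  case (frag_of a)
  then show ?case using frag_of_diff_expand_in_tensor_kernel by auto
qed

lemma lookup_expand:
  assumes "Poly_Mapping.keys f \<subseteq> pairs"
  shows "Poly_Mapping.lookup (expand f) (b, b') = frag_eval (coord_pair b b') f"
  using assms
proof (induction f rule: free_Abelian_group_induct[consumes 1, case_names zero diff frag_of])
  case (diff x y)
  then show ?case by (simp add: expand_diff frag_eval_diff lookup_minus)
qed (auto simp: expand_def lookup_sum_frag_of_pairs finite_coords coord_pair_def coord_def)

lemma keys_expand:
  assumes "Poly_Mapping.keys f \<subseteq> pairs"
  shows "Poly_Mapping.keys (expand f) \<subseteq> pairs"
proof
  fix p assume "p \<in> Poly_Mapping.keys (expand f)"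
  then obtain x y where xy: "(x, y) \<in> Poly_Mapping.keys f"
    "p \<in> Poly_Mapping.keys (\<Sum>b\<in>coords x. \<Sum>b'\<in>coords y. frag_of (b, b'))"
    unfolding expand_def by (auto dest!: subsetD[OF keys_frag_extend])
  then have "p \<in> coords x \<times> coords y" using keys_sum_frag_of_pairs by blast
  then show "p \<in> pairs" using xy(1) assms coords_subset_carrier by blast
qed

lemma antisym_diag_in_tensor_kernel_imp_one:
  assumes g: "g \<in> carrier G" and rel: "f - frag_swap f + frag_of (g, g) \<in> tensor_kernel"
  shows "g = \<one>"
proof -
  have "b \<notin> coords g" for b
  proof -
    have "frag_eval (coord_pair b b) (f - frag_swap f + frag_of (g, g)) = coord b g * coord b g"
      by (simp add: frag_eval_add frag_eval_diff frag_eval_swap coord_pair_swap) (simp add: coord_pair_def)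
    then show ?thesis
      using even_frag_eval_tensor_kernel[OF bilinear_mod2_coord_pair[of b b] rel] by (auto simp: coord_def)
  qed
  then have "coords g = {}" by blast
  with prod_set_coords[OF g] show ?thesis by simp
qed

lemma antisym_in_tensor_kernel_imp_wedge_kernel:
  assumes f: "Poly_Mapping.keys f \<subseteq> pairs" and rel: "f - frag_swap f \<in> tensor_kernel"
  shows "f \<in> wedge_kernel"
proof -
  have "expand f \<in> wedge_kernel"
  proof (rule antisym_mod2_in_wedge_kernel[OF keys_expand[OF f]])
    fix a a'
    have "Poly_Mapping.lookup (expand f) (a, a') - Poly_Mapping.lookup (expand f) (a', a)
          = frag_eval (coord_pair a a') (f - frag_swap f)"
      by (simp add: lookup_expand[OF f] frag_eval_diff frag_eval_swap coord_pair_swap)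
    then show "even (Poly_Mapping.lookup (expand f) (a, a') - Poly_Mapping.lookup (expand f) (a', a))"
      using even_frag_eval_tensor_kernel[OF bilinear_mod2_coord_pair rel] by simp
  qed
  moreover have "f - expand f \<in> wedge_kernel"
    using diff_expand_in_tensor_kernel[OF f] tensor_kernel_subset_wedge_kernel by blast
  ultimately show ?thesis using free_Abelian_subgroup_add[OF subgroup_wedge_kernel] by fastforce
qed

end

context elementary_abelian_2_group
begin

lemma basis_exists: "\<exists>B coords. elementary_abelian_2_group_basis G B coords"
proof -
  obtain B where B: "independent B" and maximal: "\<And>Z. independent Z \<Longrightarrow> B \<subseteq> Z \<Longrightarrow> Z = B"
    using maximal_independent_exists by auto
  have B_carrier: "B \<subseteq> carrier G" using B by (simp add: independent_def)
  define coords where "coords x = (THE S. finite S \<and> S \<subseteq> B \<and> prod_set S = x)" for x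
  have coords: "finite (coords x) \<and> coords x \<subseteq> B \<and> prod_set (coords x) = x"
    if "x \<in> carrier G" for x
  proof -
    have "\<exists>!S. finite S \<and> S \<subseteq> B \<and> prod_set S = x"
      using maximal_independent_spans[OF B maximal that] independent_prod_set_inj[OF B] by blast
    then show ?thesis unfolding coords_def by (rule theI')
  qed
  have "coords (x \<otimes> y) = sym_diff (coords x) (coords y)" if "x \<in> carrier G" "y \<in> carrier G" for x y
  proof (rule independent_prod_set_inj[OF B])
    have "prod_set (coords (x \<otimes> y)) = prod_set (coords x) \<otimes> prod_set (coords y)"
      using coords that by simp
    also have "\<dots> = prod_set (sym_diff (coords x) (coords y))"
      by (rule prod_set_sym_diff[symmetric]) (use coords that B_carrier in auto)
    finally show "prod_set (coords (x \<otimes> y)) = prod_set (sym_diff (coords x) (coords y))" .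
  qed (use coords that in auto)
  then have "elementary_abelian_2_group_basis G B coords"
    using B_carrier coords by unfold_locales auto
  then show ?thesis by blast
qed

lemma antisym_diag_in_tensor_kernel:
  assumes "Poly_Mapping.keys f \<subseteq> pairs" "g \<in> carrier G"
    and "f - frag_swap f + frag_of (g, g) \<in> tensor_kernel"
  shows "g = \<one>" and "f \<in> wedge_kernel"
proof -
  obtain B coords where "elementary_abelian_2_group_basis G B coords"
    using basis_exists by blast
  then interpret elementary_abelian_2_group_basis G B coords .
  show "g = \<one>" by (rule antisym_diag_in_tensor_kernel_imp_one[OF assms(2,3)])
  then have "f - frag_swap f \<in> tensor_kernel"
    using free_Abelian_subgroup_diff[OF subgroup_tensor_kernel assms(3) one_left_in_tensor_kernel[of \<one>]]
    by simp
  then show "f \<in> wedge_kernel" by (rule antisym_in_tensor_kernel_imp_wedge_kernel[OF assms(1)])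
qed

end

locale symmetrizer = elementary_abelian_2_group +
  fixes \<pi> :: "(('a \<times> 'a) \<Rightarrow>\<^sub>0 int) set \<Rightarrow> (('a \<times> 'a) \<Rightarrow>\<^sub>0 int) set"
  assumes pi_hom: "\<pi> \<in> hom (ext_sq G) (sym_tensor_sq G)"
    and pi_wedge: "u \<in> carrier G \<Longrightarrow> v \<in> carrier G \<Longrightarrow>
      \<pi> (wedge G u v) = tens G u v \<otimes>\<^bsub>tensor_sq G\<^esub> inv\<^bsub>tensor_sq G\<^esub> (tens G v u)"
begin

lemma group_tensor_sq: "group (tensor_sq G)"
  using comm_group_tensor_sq comm_group.axioms(2) by blast

lemma group_ext_sq: "group (ext_sq G)"
  using comm_group_ext_sq comm_group.axioms(2) by blast

lemma group_sym_tensor_sq: "group (sym_tensor_sq G)"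
  unfolding sym_tensor_sq_def by (rule group.group_subgroup_generated[OF group_tensor_sq])

lemma sym_tensor_sq_subset: "carrier (sym_tensor_sq G) \<subseteq> carrier (tensor_sq G)"
  unfolding sym_tensor_sq_def by (rule group.carrier_subgroup_generated_subset[OF group_tensor_sq])

lemma sym_tensor_sq_mult [simp]: "x \<otimes>\<^bsub>sym_tensor_sq G\<^esub> y = x \<otimes>\<^bsub>tensor_sq G\<^esub> y"
  by (simp add: sym_tensor_sq_def)

lemma sym_tensor_sq_one [simp]: "\<one>\<^bsub>sym_tensor_sq G\<^esub> = \<one>\<^bsub>tensor_sq G\<^esub>"
  by (simp add: sym_tensor_sq_def)

lemma sym_tensor_sq_inv:
  "x \<in> carrier (sym_tensor_sq G) \<Longrightarrow> inv\<^bsub>sym_tensor_sq G\<^esub> x = inv\<^bsub>tensor_sq G\<^esub> x"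
  unfolding sym_tensor_sq_def
  by (rule group.inv_subgroup_generated[OF group_tensor_sq]) (simp add: sym_tensor_sq_def)

lemma tens_diag_carrier: "g \<in> carrier G \<Longrightarrow> tens G g g \<in> carrier (sym_tensor_sq G)"
  unfolding sym_tensor_sq_def carrier_subgroup_generated
  by (rule generate.incl) (simp add: tens_carrier)

lemma group_hom_pi: "group_hom (ext_sq G) (sym_tensor_sq G) \<pi>"
  unfolding group_hom_def group_hom_axioms_def using group_ext_sq group_sym_tensor_sq pi_hom by blast

lemma pi_carrier: "t \<in> carrier (ext_sq G) \<Longrightarrow> \<pi> t \<in> carrier (sym_tensor_sq G)"
  using pi_hom by (auto simp: hom_def)

lemma pi_carrier_tensor_sq: "t \<in> carrier (ext_sq G) \<Longrightarrow> \<pi> t \<in> carrier (tensor_sq G)"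
  using pi_carrier sym_tensor_sq_subset by blast

lemma pi_wedge_eq_mult_swap:
  "u \<in> carrier G \<Longrightarrow> v \<in> carrier G \<Longrightarrow> \<pi> (wedge G u v) = tens G u v \<otimes>\<^bsub>tensor_sq G\<^esub> tens G v u"
  using group.inv_equality[OF group_tensor_sq tens_mult_self[of v u]] tens_carrier
  by (simp add: pi_wedge)

lemma pi_wedge_rcos:
  assumes "Poly_Mapping.keys f \<subseteq> pairs"
  shows "\<pi> (wedge_kernel #>\<^bsub>free_pairs\<^esub> f) = tensor_kernel #>\<^bsub>free_pairs\<^esub> (f - frag_swap f)"
  using assms
proof (induction f rule: free_Abelian_group_induct[consumes 1, case_names zero diff frag_of])
  case zero
  have "\<pi> (wedge_kernel #>\<^bsub>free_pairs\<^esub> 0) = \<pi> \<one>\<^bsub>ext_sq G\<^esub>"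
    by (simp add: free_Abelian_rcos_zero[OF subgroup_wedge_kernel] ext_sq_Mod)
  also have "\<dots> = tensor_kernel #>\<^bsub>free_pairs\<^esub> (0 - frag_swap 0)"
    using group_hom.hom_one[OF group_hom_pi] by (simp add: tensor_sq_Mod free_Abelian_rcos_zero[OF subgroup_tensor_kernel])
  finally show ?case .
next
  case (diff x y)
  have x: "wedge_kernel #>\<^bsub>free_pairs\<^esub> x \<in> carrier (ext_sq G)"
   and y: "wedge_kernel #>\<^bsub>free_pairs\<^esub> y \<in> carrier (ext_sq G)"
    unfolding ext_sq_Mod using diff by (auto intro: free_Abelian_rcos_carrier)
  have "\<pi> (wedge_kernel #>\<^bsub>free_pairs\<^esub> (x - y))
        = \<pi> ((wedge_kernel #>\<^bsub>free_pairs\<^esub> x) \<otimes>\<^bsub>ext_sq G\<^esub> inv\<^bsub>ext_sq G\<^esub> (wedge_kernel #>\<^bsub>free_pairs\<^esub> y))"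
    unfolding ext_sq_Mod using free_Abelian_rcos_diff[OF subgroup_wedge_kernel] diff by simp
  also have "\<dots> = \<pi> (wedge_kernel #>\<^bsub>free_pairs\<^esub> x) \<otimes>\<^bsub>tensor_sq G\<^esub> inv\<^bsub>tensor_sq G\<^esub> \<pi> (wedge_kernel #>\<^bsub>free_pairs\<^esub> y)"
    using x y group_hom.hom_mult[OF group_hom_pi] group_hom.hom_inv[OF group_hom_pi]
      group.inv_closed[OF group_ext_sq] sym_tensor_sq_inv pi_carrier
    by simp
  also have "\<dots> = tensor_kernel #>\<^bsub>free_pairs\<^esub> ((x - frag_swap x) - (y - frag_swap y))"
    unfolding diff(3,4) tensor_sq_Mod
    by (rule free_Abelian_rcos_diff[OF subgroup_tensor_kernel keys_diff_frag_swap[OF diff(1)]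
          keys_diff_frag_swap[OF diff(2)], symmetric])
  also have "(x - frag_swap x) - (y - frag_swap y) = (x - y) - frag_swap (x - y)"
    by (simp add: frag_swap_diff)
  finally show ?case .
next
  case (frag_of a)
  then obtain u v where "a = (u, v)" "u \<in> carrier G" "v \<in> carrier G" by auto
  then show ?case
    using pi_wedge free_Abelian_rcos_diff[OF subgroup_tensor_kernel, of "frag_of (u, v)" "frag_of (v, u)"]
    by (simp add: wedge_rcos tens_rcos tensor_sq_Mod)
qed

definition phi :: "(('a \<times> 'a) \<Rightarrow>\<^sub>0 int) set \<times> 'a \<Rightarrow> (('a \<times> 'a) \<Rightarrow>\<^sub>0 int) set" where
  "phi = (\<lambda>(t, g). \<pi> t \<otimes>\<^bsub>sym_tensor_sq G\<^esub> tens G g g)"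

lemma phi_hom: "phi \<in> hom (wedge_prod G) (sym_tensor_sq G)"
proof (rule homI, simp_all only: split_paired_all wedge_prod_carrier)
  interpret T: comm_group "tensor_sq G" by (rule comm_group_tensor_sq)
  fix t g assume "(t, g) \<in> carrier (ext_sq G) \<times> carrier G"
  then show "phi (t, g) \<in> carrier (sym_tensor_sq G)"
    using monoid.m_closed[OF group.is_monoid[OF group_sym_tensor_sq]] pi_carrier tens_diag_carrier
    by (auto simp: phi_def)
next
  interpret T: comm_group "tensor_sq G" by (rule comm_group_tensor_sq)
  fix s g t h assume "(s, g) \<in> carrier (ext_sq G) \<times> carrier G" "(t, h) \<in> carrier (ext_sq G) \<times> carrier G"
  then have c: "s \<in> carrier (ext_sq G)" "t \<in> carrier (ext_sq G)" "g \<in> carrier G" "h \<in> carrier G"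
    by auto
  have pi_mult: "\<pi> (s \<otimes>\<^bsub>ext_sq G\<^esub> t \<otimes>\<^bsub>ext_sq G\<^esub> wedge G g h)
      = \<pi> s \<otimes>\<^bsub>tensor_sq G\<^esub> \<pi> t \<otimes>\<^bsub>tensor_sq G\<^esub> (tens G g h \<otimes>\<^bsub>tensor_sq G\<^esub> tens G h g)"
    using c group_hom.hom_mult[OF group_hom_pi] wedge_carrier group.is_monoid[OF group_ext_sq]
    by (simp add: pi_wedge_eq_mult_swap monoid.m_closed)
  have tens_square: "tens G (g \<otimes> h) (g \<otimes> h)
      = tens G g g \<otimes>\<^bsub>tensor_sq G\<^esub> tens G g h \<otimes>\<^bsub>tensor_sq G\<^esub> (tens G h g \<otimes>\<^bsub>tensor_sq G\<^esub> tens G h h)"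
    using c by (simp add: tens_mult_left tens_mult_right tens_carrier T.m_ac)
  have "phi ((s, g) \<otimes>\<^bsub>wedge_prod G\<^esub> (t, h))
        = (\<pi> s \<otimes>\<^bsub>tensor_sq G\<^esub> tens G g g \<otimes>\<^bsub>tensor_sq G\<^esub> (\<pi> t \<otimes>\<^bsub>tensor_sq G\<^esub> tens G h h))
          \<otimes>\<^bsub>tensor_sq G\<^esub> ((tens G g h \<otimes>\<^bsub>tensor_sq G\<^esub> tens G g h)
          \<otimes>\<^bsub>tensor_sq G\<^esub> (tens G h g \<otimes>\<^bsub>tensor_sq G\<^esub> tens G h g))"
    using c by (simp add: wedge_prod_mult phi_def pi_mult tens_square pi_carrier_tensor_sq tens_carrier T.m_ac)
  also have "\<dots> = phi (s, g) \<otimes>\<^bsub>sym_tensor_sq G\<^esub> phi (t, h)"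
    using c by (simp add: phi_def tens_mult_self pi_carrier_tensor_sq tens_carrier)
  finally show "phi ((s, g) \<otimes>\<^bsub>wedge_prod G\<^esub> (t, h)) = phi (s, g) \<otimes>\<^bsub>sym_tensor_sq G\<^esub> phi (t, h)" .
qed

lemma phi_one_left: "g \<in> carrier G \<Longrightarrow> phi (\<one>\<^bsub>ext_sq G\<^esub>, g) = tens G g g"
  using group_hom.hom_one[OF group_hom_pi] tens_carrier group.is_monoid[OF group_tensor_sq]
  by (simp add: phi_def monoid.l_one)

lemma phi_kernel_trivial:
  assumes "x \<in> carrier (wedge_prod G)" "phi x = \<one>\<^bsub>sym_tensor_sq G\<^esub>"
  shows "x = \<one>\<^bsub>wedge_prod G\<^esub>"
proof -
  obtain t g where x: "x = (t, g)" "t \<in> carrier (ext_sq G)" "g \<in> carrier G"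
    using assms(1) by (auto simp: wedge_prod_carrier)
  obtain f where f: "Poly_Mapping.keys f \<subseteq> pairs" "t = wedge_kernel #>\<^bsub>free_pairs\<^esub> f"
    using x(2) by (auto simp: ext_sq_Mod carrier_FactGroup)
  have keys: "Poly_Mapping.keys (f - frag_swap f) \<subseteq> pairs"
    "Poly_Mapping.keys (frag_of (g, g)) \<subseteq> pairs"
    "Poly_Mapping.keys (f - frag_swap f + frag_of (g, g)) \<subseteq> pairs"
    using keys_diff_frag_swap[OF f(1)] keys_add[of "f - frag_swap f" "frag_of (g, g)"] x(3) by auto
  have "phi x = tensor_kernel #>\<^bsub>free_pairs\<^esub> (f - frag_swap f + frag_of (g, g))"
    using pi_wedge_rcos[OF f(1)] free_Abelian_rcos_mult[OF subgroup_tensor_kernel keys(1,2)]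
    by (simp add: phi_def x(1) f(2) tens_rcos tensor_sq_Mod)
  then have "f - frag_swap f + frag_of (g, g) \<in> tensor_kernel"
    using assms(2) free_Abelian_rcos_eq_subgroup_iff[OF subgroup_tensor_kernel keys(3)]
    by (simp add: tensor_sq_Mod)
  with antisym_diag_in_tensor_kernel[OF f(1) x(3)] have "g = \<one>" "f \<in> wedge_kernel" by auto
  then show ?thesis
    using free_Abelian_rcos_eq_subgroup_iff[OF subgroup_wedge_kernel f(1)] f(2)
    by (simp add: x(1) wedge_prod_one ext_sq_Mod)
qed

lemma phi_surjective: "carrier (sym_tensor_sq G) \<subseteq> phi ` carrier (wedge_prod G)"
proof -
  have "group_hom (wedge_prod G) (tensor_sq G) phi"
    using group_wedge_prod group_tensor_sq phi_hom sym_tensor_sq_subset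
    by (auto simp: group_hom_def group_hom_axioms_def hom_def)
  then have "subgroup (phi ` carrier (wedge_prod G)) (tensor_sq G)"
    by (rule group_hom.img_is_subgroup)
  moreover have "tens G v v \<in> phi ` carrier (wedge_prod G)" if "v \<in> carrier G" for v
    using phi_one_left[OF that] that group.is_monoid[OF group_ext_sq]
    by (force simp: wedge_prod_carrier monoid.one_closed)
  ultimately show ?thesis
    unfolding sym_tensor_sq_def carrier_subgroup_generated
    by (intro group.generate_subgroup_incl[OF group_tensor_sq]) auto
qed

lemma phi_iso: "phi \<in> iso (wedge_prod G) (sym_tensor_sq G)"
proof -
  have "group_hom (wedge_prod G) (sym_tensor_sq G) phi"
    unfolding group_hom_def group_hom_axioms_def using group_wedge_prod group_sym_tensor_sq phi_hom by blast
  then show ?thesis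
    using group_hom.iso_iff phi_surjective phi_kernel_trivial by blast
qed

end

theorem theorem4p1:
  fixes G :: "('a, 'b) monoid_scheme"
    and \<pi> :: "(('a \<times> 'a) \<Rightarrow>\<^sub>0 int) set \<Rightarrow> (('a \<times> 'a) \<Rightarrow>\<^sub>0 int) set"
  assumes "comm_group G"
    and "\<forall>x \<in> carrier G. x \<otimes>\<^bsub>G\<^esub> x = \<one>\<^bsub>G\<^esub>"
    and "\<pi> \<in> hom (ext_sq G) (sym_tensor_sq G)"
    and "\<forall>u \<in> carrier G. \<forall>v \<in> carrier G.
           \<pi> (wedge G u v) = tens G u v \<otimes>\<^bsub>tensor_sq G\<^esub> inv\<^bsub>tensor_sq G\<^esub> (tens G v u)"
  shows "group (wedge_prod G)
    \<and> (\<lambda>(t, g). \<pi> t \<otimes>\<^bsub>sym_tensor_sq G\<^esub> tens G g g) \<in> iso (wedge_prod G) (sym_tensor_sq G)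
    \<and> (\<forall>g \<in> carrier G. (\<lambda>(t, g). \<pi> t \<otimes>\<^bsub>sym_tensor_sq G\<^esub> tens G g g) (\<one>\<^bsub>ext_sq G\<^esub>, g) = tens G g g)"
proof -
  interpret symmetrizer G \<pi>
    by (intro symmetrizer.intro elementary_abelian_2_group.intro elementary_abelian_2_group_axioms.intro
        symmetrizer_axioms.intro) (use assms in auto)
  show ?thesis
    using group_wedge_prod phi_iso phi_one_left unfolding phi_def by blast
qed

end
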